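(* Let $H$ be a bipartite multigraph with parts $A$ and $B$, both nonempty, and let $\alpha>0$. Suppose that for every nonempty subset $B'\subseteq B$, setting $A'=N(B')\subseteq A$, there exists a vertex $u\in A'$ with $d_{B'}(u)<\alpha$, where $d_{B'}(u)$ is the number of edges (with multiplicity) between $u$ and $B'$. Then $\alpha|A|>|B|$.
   Context: $N(B')$ denotes the set of vertices of $A$ adjacent to at least one vertex of $B'$. *)

theory Defs
  imports Complex_Main
begin

text \<open>A bipartite multigraph with parts A and B is given by a multiplicity
function mult :: 'a \<Rightarrow> 'b \<Rightarrow> nat, where mult u v is the number of
edges between u \<in> A and v \<in> B (values outside A \<times> B are irrelevant).\<close>

definition nbhd :: "('a \<Rightarrow> 'b \<Rightarrow> nat) \<Rightarrow> 'a set \<Rightarrow> 'b set \<Rightarrow> 'a set" where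
  "nbhd mult A B' = {u \<in> A. \<exists>v \<in> B'. mult u v > 0}"

definition deg_into :: "('a \<Rightarrow> 'b \<Rightarrow> nat) \<Rightarrow> 'b set \<Rightarrow> 'a \<Rightarrow> nat" where
  "deg_into mult B' u = (\<Sum>v \<in> B'. mult u v)"

end

theory Submission
  imports Defs
begin

text \<open>Peel off the sparse vertices one at a time. For nonempty \<open>B' \<subseteq> B\<close> pick \<open>u \<in> N(B')\<close>
  with \<open>d\<^sub>B\<^sub>'(u) < \<alpha>\<close>, and let \<open>D\<close> be the neighbours of \<open>u\<close> in \<open>B'\<close>; then \<open>|D| \<le> d\<^sub>B\<^sub>'(u) < \<alpha>\<close>,
  and \<open>u\<close> is not a neighbour of \<open>C = B' - D\<close>, so \<open>N(C) \<union> {u} \<subseteq> N(B')\<close>. Induction on \<open>|B'|\<close>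
  yields \<open>|B'| < \<alpha> |N(B')|\<close>, and \<open>N(B) \<subseteq> A\<close> finishes the proof.\<close>

lemma nbhd_subset: "nbhd mult A B' \<subseteq> A"
  by (auto simp: nbhd_def)

lemma insert_nbhd_subset_nbhd:
  assumes "u \<in> nbhd mult A B'" and "C \<subseteq> B'"
  shows "insert u (nbhd mult A C) \<subseteq> nbhd mult A B'"
  using assms by (auto simp: nbhd_def)

lemma card_neighbours_le_deg_into:
  assumes "finite B'"
  shows "card {v \<in> B'. 0 < mult u v} \<le> deg_into mult B' u"
proof -
  have "card {v \<in> B'. 0 < mult u v} = (\<Sum>v \<in> {v \<in> B'. 0 < mult u v}. 1)"
    by simp
  also have "\<dots> \<le> (\<Sum>v \<in> {v \<in> B'. 0 < mult u v}. mult u v)"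
    by (rule sum_mono) auto
  also have "\<dots> \<le> (\<Sum>v \<in> B'. mult u v)"
    using assms by (intro sum_mono2) auto
  finally show ?thesis
    unfolding deg_into_def .
qed

lemma card_lt_card_nbhd_of_sparse_vertex:
  fixes \<alpha> :: real
  assumes "finite A" and "finite B" and "\<alpha> > 0"
    and sparse: "\<And>B'. B' \<subseteq> B \<Longrightarrow> B' \<noteq> {} \<Longrightarrow>
           \<exists>u \<in> nbhd mult A B'. real (deg_into mult B' u) < \<alpha>"
    and "B' \<subseteq> B" and "B' \<noteq> {}"
  shows "real (card B') < \<alpha> * real (card (nbhd mult A B'))"
  using assms(5,6)
proof (induction "card B'" arbitrary: B' rule: less_induct)
  case less
  have "finite B'"
    using less.prems(1) \<open>finite B\<close> finite_subset by blast
  obtain u where u: "u \<in> nbhd mult A B'" and deg_u: "real (deg_into mult B' u) < \<alpha>"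
    using sparse less.prems by blast
  define D where "D = {v \<in> B'. 0 < mult u v}"
  define C where "C = B' - D"
  have "D \<subseteq> B'" and "D \<noteq> {}"
    using u by (auto simp: D_def nbhd_def)
  then have card_B': "card B' = card C + card D" and "card D > 0"
    using \<open>finite B'\<close> card_Diff_subset[of D B'] card_mono[of B' D]
    by (auto simp: C_def finite_subset)
  have "real (card D) < \<alpha>"
    using card_neighbours_le_deg_into[OF \<open>finite B'\<close>, of mult u] deg_u
    unfolding D_def by linarith
  have C_bound: "real (card C) \<le> \<alpha> * real (card (nbhd mult A C))"
  proof (cases "C = {}")
    case True
    then show ?thesis using \<open>\<alpha> > 0\<close> by simp
  next
    case False
    have "C \<subseteq> B"
      using less.prems by (auto simp: C_def)
    moreover have "card C < card B'"
      using card_B' \<open>card D > 0\<close> by linarith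
    ultimately have "real (card C) < \<alpha> * real (card (nbhd mult A C))"
      using less.hyps False by blast
    then show ?thesis
      by linarith
  qed
  have "u \<notin> nbhd mult A C"
    by (auto simp: nbhd_def C_def D_def)
  moreover have "finite (nbhd mult A B')"
    using finite_subset[OF nbhd_subset \<open>finite A\<close>] .
  moreover have "insert u (nbhd mult A C) \<subseteq> nbhd mult A B'"
    using u by (rule insert_nbhd_subset_nbhd) (simp add: C_def)
  ultimately have "card (nbhd mult A C) + 1 \<le> card (nbhd mult A B')"
    by (metis Suc_eq_plus1 card_insert_disjoint card_mono finite_insert finite_subset)
  then have "\<alpha> * (real (card (nbhd mult A C)) + 1) \<le> \<alpha> * real (card (nbhd mult A B'))"
    using \<open>\<alpha> > 0\<close> by (intro mult_left_mono) linarith+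
  then show ?case
    using card_B' C_bound \<open>real (card D) < \<alpha>\<close> by (simp add: distrib_left)
qed

theorem lemma4:
  fixes A :: "'a set" and B :: "'b set" and mult :: "'a \<Rightarrow> 'b \<Rightarrow> nat" and \<alpha> :: real
  assumes "finite A" and "finite B" and "A \<noteq> {}" and "B \<noteq> {}"
    and "\<alpha> > 0"
    and "\<And>B'. B' \<subseteq> B \<Longrightarrow> B' \<noteq> {} \<Longrightarrow>
           \<exists>u \<in> nbhd mult A B'. real (deg_into mult B' u) < \<alpha>"
  shows "\<alpha> * real (card A) > real (card B)"
proof -
  have "real (card B) < \<alpha> * real (card (nbhd mult A B))"
    using card_lt_card_nbhd_of_sparse_vertex[OF assms(1,2,5,6)] assms(4) by blast
  also have "\<dots> \<le> \<alpha> * real (card A)"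
    using assms(1,5) card_mono[OF assms(1) nbhd_subset] by simp
  finally show ?thesis .
qed

end
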